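(* Let $G=(V,E)$ be a connected graph with $n$ vertices, $\tau$ a set of types with $|\tau|=k>1$, $f:\tau\to\mathbb{Q}_{\ge1}$ a fitness function, and $\alpha\in\tau^+(f)$. Let $f^*=\max\{f(j): j\in\tau\setminus\{\alpha\}\}$ and suppose $f^*<f(\alpha)=f^+$. Let $M$ be a Moran process $M(G,\tau,f,M_0)$ and suppose that $V_\alpha(t)\notin\{\emptyset,V\}$ for a non-negative integer $t$. Then (conditional on $M_t$) $\mathbb{E}(\Psi_\alpha(M_{t+1})-\Psi_\alpha(M_t))>(1-f^*/f^+)/n^3$.
   Context: $f^+=\max_{i\in\tau}f(i)$, $\tau^+(f)=\{i:f(i)=f^+\}$. For $G=(V,E)$, $N(v)$ is the neighbourhood and $d(v)=|N(v)|$. For a state $S:V\to\tau$, $S|_{v\to w}$ equals $S$ except $w$ gets type $S(v)$. The Moran process $M(G,\tau,f,M_0)$: Markov chain on states from $M_0$; given $M_t$, choose $v$ with probability $f(M_t(v))/\sum_uf(M_t(u))$, then $w\in N(v)$ uniformly, and set $M_{t+1}=M_t|_{v\to w}$. $V_j(t)=\{v: M_t(v)=j\}$. The potential $\Psi_j(S)=\sum_{v:S(v)=j}1/d(v)$. *)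

theory Defs
  imports Complex_Main
begin

definition simple_graph :: "'v set \<Rightarrow> ('v \<Rightarrow> 'v \<Rightarrow> bool) \<Rightarrow> bool" where
  "simple_graph V E \<longleftrightarrow> finite V \<and> (\<forall>u w. E u w \<longrightarrow> u \<in> V \<and> w \<in> V)
     \<and> (\<forall>u w. E u w \<longrightarrow> E w u) \<and> (\<forall>u. \<not> E u u)"

definition connected_graph :: "'v set \<Rightarrow> ('v \<Rightarrow> 'v \<Rightarrow> bool) \<Rightarrow> bool" where
  "connected_graph V E \<longleftrightarrow> V \<noteq> {} \<and>
     (\<forall>u\<in>V. \<forall>w\<in>V. (u, w) \<in> {(x, y). E x y}\<^sup>*)"

definition nbhd :: "'v set \<Rightarrow> ('v \<Rightarrow> 'v \<Rightarrow> bool) \<Rightarrow> 'v \<Rightarrow> 'v set" where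
  "nbhd V E v = {w \<in> V. E v w}"

definition deg :: "'v set \<Rightarrow> ('v \<Rightarrow> 'v \<Rightarrow> bool) \<Rightarrow> 'v \<Rightarrow> nat" where
  "deg V E v = card (nbhd V E v)"

definition reproduce :: "('v \<Rightarrow> 't) \<Rightarrow> 'v \<Rightarrow> 'v \<Rightarrow> ('v \<Rightarrow> 't)" where
  "reproduce S v w = S(w := S v)"

definition types_set :: "'v set \<Rightarrow> ('v \<Rightarrow> 't) \<Rightarrow> 't \<Rightarrow> 'v set" where
  "types_set V S j = {v \<in> V. S v = j}"

definition Psi :: "'v set \<Rightarrow> ('v \<Rightarrow> 'v \<Rightarrow> bool) \<Rightarrow> 't \<Rightarrow> ('v \<Rightarrow> 't) \<Rightarrow> real" where
  "Psi V E j S = (\<Sum>v\<in>types_set V S j. 1 / real (deg V E v))"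

definition total_fitness :: "'v set \<Rightarrow> ('t \<Rightarrow> real) \<Rightarrow> ('v \<Rightarrow> 't) \<Rightarrow> real" where
  "total_fitness V f S = (\<Sum>u\<in>V. f (S u))"

text \<open>Expected one-step change E(g(M_{t+1}) - g(M_t) | M_t = S) of the Moran process:
  v is chosen with probability f(S v)/total fitness, then w uniformly in N(v),
  and the new state is S|_{v->w}.\<close>
definition moran_drift :: "'v set \<Rightarrow> ('v \<Rightarrow> 'v \<Rightarrow> bool) \<Rightarrow> ('t \<Rightarrow> real)
     \<Rightarrow> (('v \<Rightarrow> 't) \<Rightarrow> real) \<Rightarrow> ('v \<Rightarrow> 't) \<Rightarrow> real" where
  "moran_drift V E f g S =
     (\<Sum>v\<in>V. \<Sum>w\<in>nbhd V E v.
        (f (S v) / total_fitness V f S) * (1 / real (deg V E v)) * (g (reproduce S v w) - g S))"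

end

theory Submission
  imports Defs
begin

text \<open>Fix the current state and let \<open>F\<close> be its total fitness. Along an edge \<open>vw\<close> with
  \<open>S v = \<alpha> \<noteq> S w\<close>, the reproduction \<open>v \<rightarrow> w\<close> raises \<open>\<Psi>\<^sub>\<alpha>\<close> by \<open>1/d(w)\<close> with probability
  \<open>f(\<alpha>)/(F d(v))\<close>, and \<open>w \<rightarrow> v\<close> lowers it by \<open>1/d(v)\<close> with probability \<open>f(S w)/(F d(w))\<close>;
  all other reproductions leave \<open>\<Psi>\<^sub>\<alpha>\<close> unchanged. Hence the drift of \<open>\<Psi>\<^sub>\<alpha>\<close> is the sum of
  \<open>(f(\<alpha>) - f(S w))/(F d(v) d(w)) \<ge> 0\<close> over these boundary edges. A connected graph in a
  nontrivial state has a boundary edge, and \<open>F \<le> n f\<^sup>+\<close>, \<open>d \<le> n - 1\<close> bound its term below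
  by \<open>(f\<^sup>+ - f\<^sup>*)/(f\<^sup>+ n (n - 1)\<^sup>2)\<close>.\<close>

lemma nbhd_subset: "simple_graph V E \<Longrightarrow> nbhd V E v \<subseteq> V - {v}"
  unfolding simple_graph_def nbhd_def by auto

lemma deg_bounds:
  assumes "simple_graph V E" "E v w"
  shows "0 < deg V E v" "deg V E v < card V"
proof -
  have V_fin: "finite V" and v_V: "v \<in> V" and "w \<in> nbhd V E v"
    using assms unfolding simple_graph_def nbhd_def by auto
  then show "0 < deg V E v"
    unfolding deg_def by (auto simp: card_gt_0_iff intro: finite_subset[OF nbhd_subset[OF assms(1)]])
  show "deg V E v < card V"
    unfolding deg_def using V_fin v_V nbhd_subset[OF assms(1)] by (intro psubset_card_mono) auto
qed

lemma connected_graph_boundary_edge: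
  assumes "connected_graph V E" "A \<subseteq> V" "A \<noteq> {}" "A \<noteq> V"
  obtains v w where "E v w" "v \<in> A" "w \<notin> A"
proof -
  obtain u x where "u \<in> A" "x \<in> V" "x \<notin> A" using assms(2-4) by blast
  then have path: "(u, x) \<in> {(a, b). E a b}\<^sup>*"
    using assms(1,2) unfolding connected_graph_def by auto
  have "y \<in> A \<or> (\<exists>v w. E v w \<and> v \<in> A \<and> w \<notin> A)" if "(u, y) \<in> {(a, b). E a b}\<^sup>*" for y
    using that by (induction rule: rtrancl_induct) (use \<open>u \<in> A\<close> in auto)
  from this[OF path] \<open>x \<notin> A\<close> show ?thesis using that by blast
qed

lemma Psi_reproduce:
  assumes "finite V" "w \<in> V"
  shows "Psi V E j (reproduce S v w)
           = Psi V E j S + (of_bool (S v = j) - of_bool (S w = j)) / real (deg V E w)"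
proof -
  let ?A = "types_set V S j"
  have A_fin: "finite ?A" using assms(1) unfolding types_set_def by simp
  have w_in_A: "w \<in> ?A \<longleftrightarrow> S w = j" using assms(2) unfolding types_set_def by simp
  have "types_set V (reproduce S v w) j = (if S v = j then insert w ?A else ?A - {w})"
    using assms(2) unfolding types_set_def reproduce_def by auto
  then show ?thesis
    unfolding Psi_def using A_fin w_in_A
    by (cases "S v = j"; cases "S w = j") (auto simp: sum.insert_if sum_diff1)
qed

lemma moran_drift_Psi:
  fixes f :: "'t \<Rightarrow> real" and S :: "'v \<Rightarrow> 't"
  assumes "simple_graph V E"
  defines "F \<equiv> total_fitness V f S" and "d \<equiv> \<lambda>v. real (deg V E v)"
  shows "moran_drift V E f (Psi V E j) S
           = (\<Sum>(v, w) \<in> {(v, w). E v w \<and> S v = j \<and> S w \<noteq> j}. (f j - f (S w)) / (F * d v * d w))"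
proof -
  have V_fin: "finite V" and E_V: "\<And>v w. E v w \<Longrightarrow> v \<in> V \<and> w \<in> V"
    and E_sym: "\<And>v w. E v w \<Longrightarrow> E w v"
    using assms(1) unfolding simple_graph_def by auto
  define gain where
    "gain v w = (if E v w \<and> S v = j \<and> S w \<noteq> j then f (S v) / (F * d v * d w) else 0)" for v w
  define loss where
    "loss v w = (if E v w \<and> S v = j \<and> S w \<noteq> j then f (S w) / (F * d v * d w) else 0)" for v w
  have "moran_drift V E f (Psi V E j) S = (\<Sum>v\<in>V. \<Sum>w\<in>nbhd V E v. gain v w - loss w v)"
    unfolding moran_drift_def using V_fin E_V E_sym
    by (intro sum.cong refl)
      (auto simp: nbhd_def gain_def loss_def Psi_reproduce F_def d_def mult.commute)
  also have "\<dots> = (\<Sum>v\<in>V. \<Sum>w\<in>V. gain v w - loss w v)"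
    using V_fin unfolding nbhd_def
    by (intro sum.cong[OF refl] sum.mono_neutral_left) (auto simp: gain_def loss_def dest: E_sym)
  also have "\<dots> = (\<Sum>v\<in>V. \<Sum>w\<in>V. gain v w - loss v w)"
    by (simp add: sum_subtractf sum.swap[of loss])
  also have "\<dots> = (\<Sum>(v, w) \<in> V \<times> V. if E v w \<and> S v = j \<and> S w \<noteq> j
                      then (f j - f (S w)) / (F * d v * d w) else 0)"
    unfolding sum.cartesian_product
    by (intro sum.cong refl) (auto simp: gain_def loss_def diff_divide_distrib)
  also have "\<dots> = (\<Sum>(v, w) \<in> {(v, w). E v w \<and> S v = j \<and> S w \<noteq> j}.
                      (f j - f (S w)) / (F * d v * d w))"
    using V_fin E_V by (intro sum.mono_neutral_cong_right) (auto split: if_splits)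
  finally show ?thesis .
qed

lemma moran_drift_Psi_ge_boundary_term:
  assumes graph: "simple_graph V E" and fittest: "\<forall>u\<in>V. 0 \<le> f (S u) \<and> f (S u) \<le> f j"
    and edge: "E v w" "S v = j" "S w \<noteq> j"
  shows "(f j - f (S w)) / (total_fitness V f S * real (deg V E v) * real (deg V E w))
           \<le> moran_drift V E f (Psi V E j) S"
proof -
  let ?B = "{(v, w). E v w \<and> S v = j \<and> S w \<noteq> j}"
  let ?t = "\<lambda>(v, w). (f j - f (S w)) / (total_fitness V f S * real (deg V E v) * real (deg V E w))"
  have E_V: "\<And>v w. E v w \<Longrightarrow> v \<in> V \<and> w \<in> V" and V_fin: "finite V"
    using graph unfolding simple_graph_def by auto
  have "finite ?B" using V_fin E_V by (auto intro: finite_subset[of _ "V \<times> V"])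
  moreover have "0 \<le> total_fitness V f S"
    unfolding total_fitness_def using fittest by (intro sum_nonneg) auto
  ultimately have "?t (v, w) \<le> sum ?t ?B"
    using edge fittest E_V by (intro member_le_sum) (auto intro!: divide_nonneg_nonneg)
  then show ?thesis by (simp only: moran_drift_Psi[OF graph] prod.case)
qed

lemma boundary_term_lower_bound:
  fixes F dv dw n fa fs fw :: real
  assumes "0 < F" "F \<le> n * fa" "1 \<le> dv" "dv \<le> n - 1" "1 \<le> dw" "dw \<le> n - 1"
    and "fw \<le> fs" "fs < fa"
  shows "(1 - fs / fa) / n ^ 3 < (fa - fw) / (F * dv * dw)"
proof -
  have "n \<ge> 2" using assms by linarith
  moreover have "0 < n * fa" using assms by linarith
  ultimately have "fa > 0" by (simp add: zero_less_mult_iff)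
  have "(1 - fs / fa) / n ^ 3 = (fa - fs) / (fa * n ^ 3)"
    using \<open>fa > 0\<close> by (simp add: field_simps)
  also have "\<dots> < (fa - fs) / ((n * fa) * (n - 1) * (n - 1))"
  proof (intro divide_strict_left_mono)
    have "(n - 1) * (n - 1) < n * n" using \<open>n \<ge> 2\<close> by (simp add: algebra_simps)
    then show "(n * fa) * (n - 1) * (n - 1) < fa * n ^ 3"
      using \<open>fa > 0\<close> \<open>n \<ge> 2\<close> mult_strict_left_mono[of _ _ "n * fa"]
      by (simp add: power3_eq_cube algebra_simps)
  qed (use assms \<open>fa > 0\<close> \<open>n \<ge> 2\<close> in auto)
  also have "\<dots> \<le> (fa - fs) / (F * dv * dw)"
    using assms \<open>fa > 0\<close> by (intro divide_left_mono mult_mono mult_pos_pos) auto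
  also have "\<dots> \<le> (fa - fw) / (F * dv * dw)"
    using assms by (intro divide_right_mono) auto
  finally show ?thesis .
qed

theorem lemma12:
  fixes V :: "'v set" and E :: "'v \<Rightarrow> 'v \<Rightarrow> bool"
    and \<tau> :: "'t set" and f :: "'t \<Rightarrow> real" and \<alpha> :: 't and S :: "'v \<Rightarrow> 't"
  assumes graph: "simple_graph V E" and conn: "connected_graph V E"
    and types_fin: "finite \<tau>" and types_card: "card \<tau> > 1"
    and fit: "\<forall>j\<in>\<tau>. f j \<in> \<rat> \<and> f j \<ge> 1"
    and alpha_in: "\<alpha> \<in> \<tau>" and alpha_max: "f \<alpha> = Max (f ` \<tau>)"
    and fstar: "Max (f ` (\<tau> - {\<alpha>})) < f \<alpha>"
    and state: "\<forall>v\<in>V. S v \<in> \<tau>"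
    and nontriv: "types_set V S \<alpha> \<noteq> {}" "types_set V S \<alpha> \<noteq> V"
  shows "moran_drift V E f (Psi V E \<alpha>) S
           > (1 - Max (f ` (\<tau> - {\<alpha>})) / Max (f ` \<tau>)) / real (card V) ^ 3"
proof -
  let ?F = "total_fitness V f S" and ?d = "\<lambda>v. real (deg V E v)" and ?n = "real (card V)"
  have V_fin: "finite V" and E_V: "\<And>v w. E v w \<Longrightarrow> v \<in> V \<and> w \<in> V"
    and E_sym: "\<And>v w. E v w \<Longrightarrow> E w v"
    using graph unfolding simple_graph_def by auto
  have fittest: "\<forall>u\<in>V. 0 \<le> f (S u) \<and> f (S u) \<le> f \<alpha>"
    unfolding alpha_max using state fit types_fin by (auto intro: Max_ge order_trans[OF zero_le_one])
  have "types_set V S \<alpha> \<subseteq> V" by (auto simp: types_set_def)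
  then obtain v w where "E v w" "v \<in> types_set V S \<alpha>" "w \<notin> types_set V S \<alpha>"
    by (rule connected_graph_boundary_edge[OF conn _ nontriv])
  then have vw: "E v w" "S v = \<alpha>" "S w \<noteq> \<alpha>" and v_V: "v \<in> V" and w_V: "w \<in> V"
    using E_V by (auto simp: types_set_def)
  have "(1 - Max (f ` (\<tau> - {\<alpha>})) / f \<alpha>) / ?n ^ 3 < (f \<alpha> - f (S w)) / (?F * ?d v * ?d w)"
  proof (rule boundary_term_lower_bound)
    show "0 < ?F" unfolding total_fitness_def
      using V_fin v_V fit state by (intro sum_pos) (auto intro: less_le_trans[OF zero_less_one])
    show "?F \<le> ?n * f \<alpha>" unfolding total_fitness_def
      using fittest by (intro sum_bounded_above) auto
    show "f (S w) \<le> Max (f ` (\<tau> - {\<alpha>}))" using vw w_V state types_fin by (intro Max_ge) auto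
  qed (use deg_bounds[OF graph vw(1)] deg_bounds[OF graph E_sym[OF vw(1)]] fstar
       in \<open>auto simp: Suc_le_eq\<close>)
  also have "\<dots> \<le> moran_drift V E f (Psi V E \<alpha>) S"
    by (rule moran_drift_Psi_ge_boundary_term[OF graph fittest vw])
  finally show ?thesis unfolding alpha_max .
qed

end
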